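(* Let $\mathcal G$ be a finitely generated almost simple group which contains a distortion element, and let $\mathcal H$ be a normal subgroup of $\mathcal G$. Then every homomorphism $\psi:\mathcal H\to\mathbb R$ is trivial.
   Context: A group is almost simple if every normal subgroup is finite or has finite index. For a finitely generated group with finite generating set, $u$ is a distortion element if it has infinite order and $\liminf_{n\to\infty}|u^n|/n=0$, $|\cdot|$ the word length. *)

theory Defs
  imports "HOL-Algebra.Algebra" "HOL-Library.Liminf_Limsup" "HOL-Library.Extended_Real"
begin

definition word_length :: "('a, 'b) monoid_scheme \<Rightarrow> 'a set \<Rightarrow> 'a \<Rightarrow> nat" where
  "word_length G S g =
     (LEAST n. \<exists>ws. length ws = n \<and> set ws \<subseteq> S \<union> m_inv G ` S
                    \<and> foldr (\<otimes>\<^bsub>G\<^esub>) ws \<one>\<^bsub>G\<^esub> = g)"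

definition finite_generating_set :: "('a, 'b) monoid_scheme \<Rightarrow> 'a set \<Rightarrow> bool" where
  "finite_generating_set G S \<longleftrightarrow> finite S \<and> S \<subseteq> carrier G \<and> generate G S = carrier G"

definition finitely_generated :: "('a, 'b) monoid_scheme \<Rightarrow> bool" where
  "finitely_generated G \<longleftrightarrow> (\<exists>S. finite_generating_set G S)"

definition infinite_order :: "('a, 'b) monoid_scheme \<Rightarrow> 'a \<Rightarrow> bool" where
  "infinite_order G u \<longleftrightarrow> (\<forall>n::nat. n > 0 \<longrightarrow> u [^]\<^bsub>G\<^esub> n \<noteq> \<one>\<^bsub>G\<^esub>)"

definition distortion_element :: "('a, 'b) monoid_scheme \<Rightarrow> 'a set \<Rightarrow> 'a \<Rightarrow> bool" where
  "distortion_element G S u \<longleftrightarrow> u \<in> carrier G \<and> infinite_order G u \<and>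
     liminf (\<lambda>n::nat. ereal (real (word_length G S (u [^]\<^bsub>G\<^esub> n)) / real n)) = 0"

definition almost_simple :: "('a, 'b) monoid_scheme \<Rightarrow> bool" where
  "almost_simple G \<longleftrightarrow>
     (\<forall>N. N \<lhd> G \<longrightarrow> finite N \<or> finite (rcosets\<^bsub>G\<^esub> N))"

definition real_add_group :: "real monoid" where
  "real_add_group = \<lparr>carrier = UNIV, monoid.mult = (+), one = 0\<rparr>"

end

theory Submission
  imports Defs
begin

(* If H is finite, \<psi> vanishes because every element of H has finite order.
   Otherwise H has finite index, and \<psi> is Lipschitz for the word length of G:
   correcting by a finite set of coset representatives extends \<psi> to a function
   on G that changes by a bounded amount under right multiplication by a
   generator. Hence \<psi> vanishes on every element of H whose powers have
   sublinear word length. A power u^k of the distortion element lies in H and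
   is again distorted; applying this to all the characters h \<mapsto> \<psi> (g h g^-1)
   puts u^k into the normal core K of ker \<psi>. Since u has infinite order, K is
   infinite, hence of finite index by almost simplicity, so every h \<in> H has a
   power in ker \<psi>, i.e. \<psi> h = 0. *)

lemma (in monoid) foldr_mult_closed:
  "set ws \<subseteq> carrier G \<Longrightarrow> foldr (\<otimes>) ws \<one> \<in> carrier G"
  by (induction ws) auto

lemma (in monoid) foldr_mult_append:
  assumes "set ws \<subseteq> carrier G" "set vs \<subseteq> carrier G"
  shows "foldr (\<otimes>) (ws @ vs) \<one> = foldr (\<otimes>) ws \<one> \<otimes> foldr (\<otimes>) vs \<one>"
  using assms by (induction ws) (auto simp: m_assoc foldr_mult_closed)

lemma (in group) ex_word_if_in_generate:
  assumes "S \<subseteq> carrier G" "x \<in> generate G S"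
  shows "\<exists>ws. set ws \<subseteq> S \<union> m_inv G ` S \<and> foldr (\<otimes>) ws \<one> = x"
  using assms(2)
proof (induction rule: generate.induct)
  case one
  show ?case by (rule exI[of _ "[]"]) simp
next
  case (incl h)
  then show ?case using assms(1) by (intro exI[of _ "[h]"]) auto
next
  case (inv h)
  then show ?case using assms(1) by (intro exI[of _ "[inv h]"]) auto
next
  case (eng h1 h2)
  then obtain ws vs where ws: "set ws \<subseteq> S \<union> m_inv G ` S" "foldr (\<otimes>) ws \<one> = h1"
    and vs: "set vs \<subseteq> S \<union> m_inv G ` S" "foldr (\<otimes>) vs \<one> = h2" by blast
  moreover have "S \<union> m_inv G ` S \<subseteq> carrier G" using assms(1) by auto
  ultimately have "foldr (\<otimes>) (ws @ vs) \<one> = h1 \<otimes> h2"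
    by (subst foldr_mult_append) auto
  then show ?case using ws vs by (intro exI[of _ "ws @ vs"]) auto
qed

lemma word_length_le:
  assumes "set ws \<subseteq> S \<union> m_inv G ` S" "foldr (\<otimes>\<^bsub>G\<^esub>) ws \<one>\<^bsub>G\<^esub> = x"
  shows "word_length G S x \<le> length ws"
  unfolding word_length_def using assms by (intro Least_le) blast

lemma (in group) word_length_witness:
  assumes "finite_generating_set G S" "x \<in> carrier G"
  obtains ws where "length ws = word_length G S x" "set ws \<subseteq> S \<union> m_inv G ` S"
    "foldr (\<otimes>) ws \<one> = x"
proof -
  have "\<exists>n ws. length ws = n \<and> set ws \<subseteq> S \<union> m_inv G ` S \<and> foldr (\<otimes>) ws \<one> = x"
    using ex_word_if_in_generate[of S x] assms unfolding finite_generating_set_def by auto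
  from LeastI_ex[OF this] show ?thesis using that unfolding word_length_def by blast
qed

lemma (in group) word_length_mult:
  assumes "finite_generating_set G S" "x \<in> carrier G" "y \<in> carrier G"
  shows "word_length G S (x \<otimes> y) \<le> word_length G S x + word_length G S y"
proof -
  obtain ws where ws: "length ws = word_length G S x" "set ws \<subseteq> S \<union> m_inv G ` S"
    "foldr (\<otimes>) ws \<one> = x"
    using word_length_witness assms by blast
  obtain vs where vs: "length vs = word_length G S y" "set vs \<subseteq> S \<union> m_inv G ` S"
    "foldr (\<otimes>) vs \<one> = y"
    using word_length_witness assms by blast
  have "S \<union> m_inv G ` S \<subseteq> carrier G" using assms(1) unfolding finite_generating_set_def by auto
  then have "set ws \<subseteq> carrier G" "set vs \<subseteq> carrier G" using ws vs by blast+
  then have "foldr (\<otimes>) (ws @ vs) \<one> = x \<otimes> y"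
    using ws vs by (subst foldr_mult_append) auto
  then have "word_length G S (x \<otimes> y) \<le> length (ws @ vs)"
    using ws vs by (intro word_length_le) auto
  then show ?thesis using ws vs by simp
qed

lemma (in group) lipschitz_word_length:
  assumes "finite_generating_set G S"
    and step: "\<And>x s. x \<in> carrier G \<Longrightarrow> s \<in> S \<union> m_inv G ` S \<Longrightarrow> \<bar>f (x \<otimes> s) - f x\<bar> \<le> M"
    and "x \<in> carrier G"
  shows "\<bar>f x - f \<one>\<bar> \<le> M * real (word_length G S x)"
proof -
  have gens: "S \<union> m_inv G ` S \<subseteq> carrier G"
    using assms(1) unfolding finite_generating_set_def by auto
  have "\<bar>f (foldr (\<otimes>) ws \<one>) - f \<one>\<bar> \<le> M * real (length ws)" if "set ws \<subseteq> S \<union> m_inv G ` S" for ws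
    using that
  proof (induction ws rule: rev_induct)
    case Nil
    then show ?case by simp
  next
    case (snoc s ws)
    then have "foldr (\<otimes>) (ws @ [s]) \<one> = foldr (\<otimes>) ws \<one> \<otimes> s"
      using gens by (subst foldr_mult_append) auto
    moreover have "\<bar>f (foldr (\<otimes>) ws \<one> \<otimes> s) - f (foldr (\<otimes>) ws \<one>)\<bar> \<le> M"
      using snoc.prems gens by (intro step foldr_mult_closed) auto
    ultimately show ?case using snoc by (simp add: algebra_simps)
  qed
  moreover obtain ws where "length ws = word_length G S x" "set ws \<subseteq> S \<union> m_inv G ` S"
    "foldr (\<otimes>) ws \<one> = x"
    using word_length_witness[OF assms(1,3)] .
  ultimately show ?thesis by metis
qed

lemma (in group) subgroup_nat_pow_closed:
  "subgroup H G \<Longrightarrow> h \<in> H \<Longrightarrow> h [^] (n::nat) \<in> H"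
  by (induction n) (auto simp: subgroup.one_closed subgroup.m_closed)

lemma (in group) hom_real_add_group_mult:
  assumes "\<psi> \<in> hom (G\<lparr>carrier := H\<rparr>) real_add_group" "a \<in> H" "b \<in> H"
  shows "\<psi> (a \<otimes> b) = \<psi> a + \<psi> b"
  using assms by (simp add: hom_def real_add_group_def)

lemma (in group) hom_real_add_group_one:
  assumes "subgroup H G" "\<psi> \<in> hom (G\<lparr>carrier := H\<rparr>) real_add_group"
  shows "\<psi> \<one> = 0"
  using hom_real_add_group_mult[OF assms(2), of \<one> \<one>] subgroup.one_closed[OF assms(1)] by simp

lemma (in group) hom_real_add_group_inv:
  assumes "subgroup H G" "\<psi> \<in> hom (G\<lparr>carrier := H\<rparr>) real_add_group" "h \<in> H"
  shows "\<psi> (inv h) = - \<psi> h"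
  using hom_real_add_group_mult[OF assms(2), of h "inv h"] hom_real_add_group_one[OF assms(1,2)]
    assms(1,3) subgroup.m_inv_closed subgroup.mem_carrier by fastforce

lemma (in group) hom_real_add_group_nat_pow:
  assumes "subgroup H G" "\<psi> \<in> hom (G\<lparr>carrier := H\<rparr>) real_add_group" "h \<in> H"
  shows "\<psi> (h [^] n) = real n * \<psi> h"
proof (induction n)
  case 0
  then show ?case using hom_real_add_group_one[OF assms(1,2)] by simp
next
  case (Suc n)
  have "h [^] n \<in> H" using assms(1,3) by (rule subgroup_nat_pow_closed)
  then show ?case
    using Suc hom_real_add_group_mult[OF assms(2), of "h [^] n" h] assms(3) by (simp add: algebra_simps)
qed

lemma (in group) hom_real_add_group_eq_0_if_pow:
  assumes "subgroup H G" "\<psi> \<in> hom (G\<lparr>carrier := H\<rparr>) real_add_group" "h \<in> H"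
    and "n > 0" "\<psi> (h [^] (n::nat)) = 0"
  shows "\<psi> h = 0"
  using assms hom_real_add_group_nat_pow[OF assms(1-3), of n] by simp

lemma (in group) conj_mult:
  assumes "g \<in> carrier G" "a \<in> carrier G" "b \<in> carrier G"
  shows "g \<otimes> (a \<otimes> b) \<otimes> inv g = (g \<otimes> a \<otimes> inv g) \<otimes> (g \<otimes> b \<otimes> inv g)"
proof -
  have "(g \<otimes> a \<otimes> inv g) \<otimes> (g \<otimes> b \<otimes> inv g) = g \<otimes> a \<otimes> (inv g \<otimes> g) \<otimes> b \<otimes> inv g"
    using assms by (simp only: m_assoc inv_closed m_closed)
  also have "\<dots> = g \<otimes> (a \<otimes> b) \<otimes> inv g"
    using assms by (simp add: m_assoc)
  finally show ?thesis by (rule sym)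
qed

lemma (in group) conj_inv:
  assumes "g \<in> carrier G" "a \<in> carrier G"
  shows "g \<otimes> inv a \<otimes> inv g = inv (g \<otimes> a \<otimes> inv g)"
  using assms by (simp add: inv_mult_group m_assoc)

lemma (in group) conj_conj:
  assumes "g \<in> carrier G" "x \<in> carrier G" "h \<in> carrier G"
  shows "g \<otimes> (x \<otimes> h \<otimes> inv x) \<otimes> inv g = (g \<otimes> x) \<otimes> h \<otimes> inv (g \<otimes> x)"
  using assms by (simp add: inv_mult_group m_assoc)

lemma (in group) hom_real_add_group_conj:
  assumes "H \<lhd> G" "\<psi> \<in> hom (G\<lparr>carrier := H\<rparr>) real_add_group" "g \<in> carrier G"
  shows "(\<lambda>h. \<psi> (g \<otimes> h \<otimes> inv g)) \<in> hom (G\<lparr>carrier := H\<rparr>) real_add_group"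
proof -
  have conj_in: "g \<otimes> h \<otimes> inv g \<in> H" if "h \<in> H" for h
    using normal.inv_op_closed2[OF assms(1,3) that] .
  have "\<psi> (g \<otimes> (a \<otimes> b) \<otimes> inv g) = \<psi> (g \<otimes> a \<otimes> inv g) + \<psi> (g \<otimes> b \<otimes> inv g)"
    if "a \<in> H" "b \<in> H" for a b
  proof -
    have "a \<in> carrier G" "b \<in> carrier G"
      using that subgroup.mem_carrier[OF normal_imp_subgroup[OF assms(1)]] by simp_all
    then show ?thesis
      using conj_mult[OF assms(3)] hom_real_add_group_mult[OF assms(2) conj_in[OF that(1)] conj_in[OF that(2)]]
      by simp
  qed
  then show ?thesis unfolding hom_def real_add_group_def by simp
qed

lemma (in group) ord_ne_0_if_finite_subgroup:
  assumes "subgroup K G" "finite K" "x \<in> K"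
  shows "ord x \<noteq> 0"
proof -
  have "generate G (carrier G \<inter> {x}) \<subseteq> K"
    using assms(3) by (intro generate_subgroup_incl[OF _ assms(1)]) auto
  then have "finite (carrier (subgroup_generated G {x}))"
    using assms(2) finite_subset by (auto simp: carrier_subgroup_generated)
  then show ?thesis
    using finite_cyclic_subgroup_order subgroup.mem_carrier[OF assms(1,3)] by blast
qed

lemma (in normal) pow_in_normal_if_finite_index:
  assumes "finite (rcosets H)" "x \<in> carrier G"
  obtains n :: nat where "n > 0" "x [^] n \<in> H"
proof -
  interpret Mod: group "G Mod H" by (rule factorgroup_is_group)
  define n where "n = Mod.ord (H #> x)"
  have "finite (carrier (G Mod H))" using assms(1) by (simp add: FactGroup_def)
  moreover have coset: "H #> x \<in> carrier (G Mod H)"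
    using assms(2) unfolding FactGroup_def RCOSETS_def by auto
  ultimately have "n > 0" unfolding n_def using Mod.ord_ge_1 by fastforce
  have "H #> x [^] n = H"
    unfolding n_def using Mod.pow_ord_eq_1[OF coset] FactGroup_pow[OF assms(2)] by simp
  moreover have "x [^] n \<in> H #> x [^] n"
    using assms(2) by (intro rcos_self[OF _ subgroup_axioms]) simp
  ultimately have "x [^] n \<in> H" by simp
  with \<open>n > 0\<close> show ?thesis by (rule that)
qed

lemma (in group) finite_transversal:
  assumes "subgroup H G" "finite (rcosets H)"
  obtains rep where "finite (rep ` carrier G)"
    and "\<And>x. x \<in> carrier G \<Longrightarrow> rep x \<in> carrier G"
    and "\<And>x. x \<in> carrier G \<Longrightarrow> rep x \<otimes> inv x \<in> H"
    and "\<And>x. x \<in> H \<Longrightarrow> rep x = rep \<one>"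
proof
  define rep where "rep x = (SOME y. y \<in> H #> x)" for x
  have rep: "rep x \<in> H #> x" if "x \<in> carrier G" for x
    unfolding rep_def using rcos_self[OF that assms(1)] by (rule someI)
  have "rep ` carrier G \<subseteq> (\<lambda>C. SOME y. y \<in> C) ` (rcosets H)"
    unfolding rep_def RCOSETS_def by blast
  then show "finite (rep ` carrier G)" by (rule finite_surj[OF assms(2)])
  show "rep x \<in> carrier G" if "x \<in> carrier G" for x
    using subsetD[OF r_coset_subset_G[OF subgroup.subset[OF assms(1)] that] rep[OF that]] .
  show "rep x \<otimes> inv x \<in> H" if "x \<in> carrier G" for x
    using subgroup.rcos_module_imp[OF assms(1) is_group that rep[OF that]] .
  show "rep x = rep \<one>" if "x \<in> H" for x
    using subgroup.rcos_const[OF assms(1) is_group that]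
      subgroup.rcos_const[OF assms(1) is_group subgroup.one_closed[OF assms(1)]]
    unfolding rep_def by simp
qed

lemma (in group) hom_real_add_group_transversal_step:
  assumes "subgroup H G" "\<psi> \<in> hom (G\<lparr>carrier := H\<rparr>) real_add_group"
    and "a \<in> carrier G" "b \<in> carrier G" "x \<in> carrier G" "s \<in> carrier G"
    and "a \<otimes> inv (x \<otimes> s) \<in> H" "b \<otimes> inv x \<in> H"
  shows "a \<otimes> inv s \<otimes> inv b \<in> H"
    and "\<psi> (a \<otimes> inv (x \<otimes> s)) = \<psi> (a \<otimes> inv s \<otimes> inv b) + \<psi> (b \<otimes> inv x)"
proof -
  have split: "a \<otimes> inv (x \<otimes> s) = (a \<otimes> inv s \<otimes> inv b) \<otimes> (b \<otimes> inv x)"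
    using assms(3-6) by (simp add: m_assoc inv_mult_group) (simp add: m_assoc[symmetric])
  then have "a \<otimes> inv s \<otimes> inv b = (a \<otimes> inv (x \<otimes> s)) \<otimes> inv (b \<otimes> inv x)"
    using assms(3-6) by (simp add: inv_solve_right)
  then show H: "a \<otimes> inv s \<otimes> inv b \<in> H"
    using subgroup.m_closed[OF assms(1,7) subgroup.m_inv_closed[OF assms(1,8)]] by simp
  show "\<psi> (a \<otimes> inv (x \<otimes> s)) = \<psi> (a \<otimes> inv s \<otimes> inv b) + \<psi> (b \<otimes> inv x)"
    unfolding split using hom_real_add_group_mult[OF assms(2) H assms(8)] .
qed

lemma (in group) hom_real_add_group_lipschitz:
  assumes "finite_generating_set G S" "subgroup H G" "finite (rcosets H)"
    and hom: "\<psi> \<in> hom (G\<lparr>carrier := H\<rparr>) real_add_group"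
  obtains M where "M \<ge> 0" "\<And>x. x \<in> H \<Longrightarrow> \<bar>\<psi> x\<bar> \<le> M * real (word_length G S x)"
proof -
  obtain rep where "finite (rep ` carrier G)"
    and rep_carrier: "\<And>x. x \<in> carrier G \<Longrightarrow> rep x \<in> carrier G"
    and rep_in_H: "\<And>x. x \<in> carrier G \<Longrightarrow> rep x \<otimes> inv x \<in> H"
    and rep_H: "\<And>x. x \<in> H \<Longrightarrow> rep x = rep \<one>"
    using finite_transversal[OF assms(2,3)] by blast
  (* On H, \<Phi> is \<psi> shifted by a constant; a generator step changes \<Phi> by a value of \<psi> on F. *)
  define \<Phi> where "\<Phi> x = \<psi> (rep x \<otimes> inv x)" for x
  define gens where "gens = S \<union> m_inv G ` S"
  have gens: "finite gens" "gens \<subseteq> carrier G"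
    using assms(1) unfolding gens_def finite_generating_set_def by auto
  define F where "F = (\<lambda>(a, s, b). a \<otimes> inv s \<otimes> inv b) ` (rep ` carrier G \<times> gens \<times> rep ` carrier G)"
  have "finite F" unfolding F_def using \<open>finite (rep ` carrier G)\<close> gens(1) by simp
  define M where "M = (\<Sum>z\<in>F. \<bar>\<psi> z\<bar>)"
  have step: "\<bar>\<Phi> (x \<otimes> s) - \<Phi> x\<bar> \<le> M" if x: "x \<in> carrier G" and s: "s \<in> gens" for x s
  proof -
    have sc: "s \<in> carrier G" using subsetD[OF gens(2) s] .
    then have xs: "x \<otimes> s \<in> carrier G" using x by simp
    define b where "b = rep (x \<otimes> s) \<otimes> inv s \<otimes> inv (rep x)"
    have "\<Phi> (x \<otimes> s) - \<Phi> x = \<psi> b"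
      unfolding \<Phi>_def b_def
      using hom_real_add_group_transversal_step(2)[OF assms(2) hom rep_carrier[OF xs] rep_carrier[OF x]
          x sc rep_in_H[OF xs] rep_in_H[OF x]] by simp
    moreover have "b \<in> F"
      unfolding F_def b_def using x sc s by (auto intro!: image_eqI[of _ _ "(rep (x \<otimes> s), s, rep x)"])
    ultimately show ?thesis
      unfolding M_def using member_le_sum[of b F "\<lambda>z. \<bar>\<psi> z\<bar>"] \<open>finite F\<close> by simp
  qed
  have "\<bar>\<psi> x\<bar> \<le> M * real (word_length G S x)" if "x \<in> H" for x
  proof -
    have x: "x \<in> carrier G" using subgroup.mem_carrier[OF assms(2) that] .
    have r: "rep \<one> \<in> H" using rep_in_H[of \<one>] rep_carrier[of \<one>] by simp
    have "\<Phi> x - \<Phi> \<one> = - \<psi> x"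
      unfolding \<Phi>_def rep_H[OF that]
      using hom_real_add_group_mult[OF hom r subgroup.m_inv_closed[OF assms(2) that]]
        hom_real_add_group_inv[OF assms(2) hom that] r rep_carrier[of \<one>] by simp
    then show ?thesis
      using lipschitz_word_length[OF assms(1), of \<Phi> M x] step x unfolding gens_def by simp
  qed
  moreover have "M \<ge> 0" unfolding M_def by (simp add: sum_nonneg)
  ultimately show ?thesis using that by blast
qed

definition distorted :: "('a, 'b) monoid_scheme \<Rightarrow> 'a set \<Rightarrow> 'a \<Rightarrow> bool" where
  "distorted G S x \<longleftrightarrow>
     (\<forall>\<epsilon>>0. \<exists>\<^sub>F n in sequentially. real (word_length G S (x [^]\<^bsub>G\<^esub> n)) < \<epsilon> * real n)"

lemma distortion_element_imp_distorted:
  assumes "distortion_element G S u"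
  shows "distorted G S u"
  unfolding distorted_def
proof (intro allI impI)
  fix \<epsilon> :: real
  assume "\<epsilon> > 0"
  define f where "f n = real (word_length G S (u [^]\<^bsub>G\<^esub> n)) / real n" for n
  have "\<not> (\<forall>\<^sub>F n in sequentially. \<epsilon> \<le> f n)"
  proof
    assume "\<forall>\<^sub>F n in sequentially. \<epsilon> \<le> f n"
    then have "ereal \<epsilon> \<le> liminf (\<lambda>n. ereal (f n))"
      by (intro Liminf_bounded) simp
    then show False using assms \<open>\<epsilon> > 0\<close> unfolding distortion_element_def f_def by simp
  qed
  then have "\<exists>\<^sub>F n in sequentially. f n < \<epsilon>"
    by (simp add: not_eventually not_le)
  moreover have "\<forall>\<^sub>F n in sequentially. n > 0"
    by (rule eventually_gt_at_top)
  ultimately show "\<exists>\<^sub>F n in sequentially. real (word_length G S (u [^]\<^bsub>G\<^esub> n)) < \<epsilon> * real n"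
    by (rule frequently_eventually_frequently[THEN frequently_elim1]) (simp add: f_def divide_less_eq)
qed

lemma (in group) word_length_nat_pow_le:
  assumes "finite_generating_set G S" "x \<in> carrier G" "m \<le> (n::nat)"
  shows "word_length G S (x [^] m) \<le> word_length G S (x [^] n) + word_length G S (inv (x [^] (n - m)))"
proof -
  have "x [^] n = x [^] m \<otimes> x [^] (n - m)"
    using nat_pow_mult[OF assms(2), of m "n - m"] assms(3) by simp
  then have "x [^] m = x [^] n \<otimes> inv (x [^] (n - m))"
    using assms(2) by (simp add: m_assoc)
  then show ?thesis using word_length_mult[OF assms(1)] assms(2) by simp
qed

lemma (in group) distorted_nat_pow:
  assumes "finite_generating_set G S" "x \<in> carrier G" "distorted G S x" "k > 0"
  shows "distorted G S (x [^] (k::nat))"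
  unfolding distorted_def frequently_sequentially
proof (intro allI impI)
  fix \<epsilon> :: real and Q :: nat
  assume "\<epsilon> > 0"
  define D where "D = (\<Sum>r<k. real (word_length G S (inv (x [^] r))))"
  define Q' where "Q' = max Q (nat \<lceil>2 * D / \<epsilon> + 1\<rceil> + 1)"
  have "\<epsilon> / (2 * real k) > 0" using \<open>\<epsilon> > 0\<close> assms(4) by simp
  then obtain n where "n \<ge> k * Q'" and n: "real (word_length G S (x [^] n)) < \<epsilon> / (2 * real k) * real n"
    using assms(3) unfolding distorted_def frequently_sequentially by blast
  define q where "q = n div k"
  define r where "r = n mod k"
  have "q \<ge> Q'" unfolding q_def using \<open>n \<ge> k * Q'\<close> assms(4)
    by (metis div_le_mono nonzero_mult_div_cancel_left not_gr0)
  moreover have "2 * D / \<epsilon> + 1 \<le> real (nat \<lceil>2 * D / \<epsilon> + 1\<rceil>)"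
    by (rule real_nat_ceiling_ge)
  ultimately have "q \<ge> Q" and "2 * D / \<epsilon> + 1 < real q"
    unfolding Q'_def by linarith+
  then have D: "D < \<epsilon> * (real q - 1) / 2"
    using \<open>\<epsilon> > 0\<close> by (simp add: field_simps)
  have "n = k * q + r" "r < k" unfolding q_def r_def using assms(4) by simp_all
  then have "real (word_length G S ((x [^] k) [^] q))
      \<le> real (word_length G S (x [^] n)) + real (word_length G S (inv (x [^] r)))"
    using word_length_nat_pow_le[OF assms(1,2), of "k * q" n] assms(2) by (simp add: nat_pow_pow)
  also have "\<dots> \<le> real (word_length G S (x [^] n)) + D"
    unfolding D_def using \<open>r < k\<close> by (intro add_left_mono member_le_sum) auto
  also have "\<dots> < \<epsilon> / (2 * real k) * real n + D"
    using n by simp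
  also have "\<dots> \<le> \<epsilon> * (real q + 1) / 2 + D"
  proof -
    have "real n \<le> real k * (real q + 1)" using \<open>n = k * q + r\<close> \<open>r < k\<close> by (simp add: algebra_simps)
    then have "\<epsilon> / (2 * real k) * real n \<le> \<epsilon> / (2 * real k) * (real k * (real q + 1))"
      using \<open>\<epsilon> > 0\<close> by (intro mult_left_mono) auto
    also have "\<dots> = \<epsilon> * (real q + 1) / 2" using assms(4) by (simp add: field_simps)
    finally show ?thesis by simp
  qed
  also have "\<dots> < \<epsilon> * real q" using D by (simp add: field_simps)
  finally show "\<exists>q\<ge>Q. real (word_length G S ((x [^] k) [^] q)) < \<epsilon> * real q"
    using \<open>q \<ge> Q\<close> by blast
qed

lemma (in group) hom_real_add_group_eq_0_if_distorted:
  assumes "finite_generating_set G S" "subgroup H G" "finite (rcosets H)"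
    and hom: "\<psi> \<in> hom (G\<lparr>carrier := H\<rparr>) real_add_group"
    and "y \<in> H" "distorted G S y"
  shows "\<psi> y = 0"
proof (rule ccontr)
  assume "\<psi> y \<noteq> 0"
  obtain M where "M \<ge> 0" and lip: "\<And>x. x \<in> H \<Longrightarrow> \<bar>\<psi> x\<bar> \<le> M * real (word_length G S x)"
    using hom_real_add_group_lipschitz[OF assms(1-3) hom] by blast
  define \<epsilon> where "\<epsilon> = \<bar>\<psi> y\<bar> / (M + 1)"
  have "\<epsilon> > 0" "M * \<epsilon> < \<bar>\<psi> y\<bar>"
    using \<open>M \<ge> 0\<close> \<open>\<psi> y \<noteq> 0\<close> unfolding \<epsilon>_def by (simp_all add: field_simps)
  then obtain n where n: "real (word_length G S (y [^] n)) < \<epsilon> * real n"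
    using assms(6) frequently_ex unfolding distorted_def by blast
  then have "n > 0" by (rule_tac ccontr) simp
  have "real n * \<bar>\<psi> y\<bar> = \<bar>\<psi> (y [^] n)\<bar>"
    using hom_real_add_group_nat_pow[OF assms(2) hom assms(5)] by (simp add: abs_mult)
  also have "\<dots> \<le> M * real (word_length G S (y [^] n))"
    using lip subgroup_nat_pow_closed[OF assms(2,5)] by blast
  also have "\<dots> \<le> M * \<epsilon> * real n"
    using n \<open>M \<ge> 0\<close> by (simp add: mult_left_mono mult.assoc)
  also have "\<dots> < \<bar>\<psi> y\<bar> * real n"
    using \<open>M * \<epsilon> < \<bar>\<psi> y\<bar>\<close> \<open>n > 0\<close> by simp
  finally show False by simp
qed

definition normal_core :: "('a, 'b) monoid_scheme \<Rightarrow> 'a set \<Rightarrow> 'a set" where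
  "normal_core G L = {x \<in> carrier G. \<forall>g\<in>carrier G. g \<otimes>\<^bsub>G\<^esub> x \<otimes>\<^bsub>G\<^esub> inv\<^bsub>G\<^esub> g \<in> L}"

lemma normal_core_iff:
  "x \<in> normal_core G L \<longleftrightarrow> x \<in> carrier G \<and> (\<forall>g\<in>carrier G. g \<otimes>\<^bsub>G\<^esub> x \<otimes>\<^bsub>G\<^esub> inv\<^bsub>G\<^esub> g \<in> L)"
  by (simp add: normal_core_def)

lemma (in group) normal_core_subset: "normal_core G L \<subseteq> L"
proof
  fix x assume "x \<in> normal_core G L"
  then have "x \<in> carrier G" and conj: "\<forall>g\<in>carrier G. g \<otimes> x \<otimes> inv g \<in> L"
    unfolding normal_core_iff by auto
  with bspec[OF conj one_closed] show "x \<in> L" by simp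
qed

lemma (in group) normal_core_normal:
  assumes "subgroup L G"
  shows "normal_core G L \<lhd> G"
  unfolding normal_inv_iff
proof (intro conjI ballI)
  show "subgroup (normal_core G L) G"
  proof (rule subgroupI)
    show "normal_core G L \<subseteq> carrier G" by (auto simp: normal_core_iff)
    have "\<one> \<in> normal_core G L" using subgroup.one_closed[OF assms] by (simp add: normal_core_iff)
    then show "normal_core G L \<noteq> {}" by blast
  next
    fix a assume a: "a \<in> normal_core G L"
    have "g \<otimes> inv a \<otimes> inv g \<in> L" if "g \<in> carrier G" for g
      using a that conj_inv[OF that] subgroup.m_inv_closed[OF assms] by (simp add: normal_core_iff)
    then show "inv a \<in> normal_core G L" using a by (simp add: normal_core_iff)
  next
    fix a b assume a: "a \<in> normal_core G L" and b: "b \<in> normal_core G L"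
    have "g \<otimes> (a \<otimes> b) \<otimes> inv g \<in> L" if "g \<in> carrier G" for g
      using a b that conj_mult[OF that] subgroup.m_closed[OF assms] by (simp add: normal_core_iff)
    then show "a \<otimes> b \<in> normal_core G L" using a b by (simp add: normal_core_iff)
  qed
next
  fix x h assume x: "x \<in> carrier G" and h: "h \<in> normal_core G L"
  have "g \<otimes> (x \<otimes> h \<otimes> inv x) \<otimes> inv g \<in> L" if "g \<in> carrier G" for g
    using x h that conj_conj[OF that x] by (simp add: normal_core_iff)
  then show "x \<otimes> h \<otimes> inv x \<in> normal_core G L" using x h by (simp add: normal_core_iff)
qed

lemma (in group) subgroup_kernel_hom_real_add_group:
  assumes "subgroup H G" "\<psi> \<in> hom (G\<lparr>carrier := H\<rparr>) real_add_group"
  shows "subgroup (kernel (G\<lparr>carrier := H\<rparr>) real_add_group \<psi>) G"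
proof -
  have kernel: "kernel (G\<lparr>carrier := H\<rparr>) real_add_group \<psi> = {x \<in> H. \<psi> x = 0}"
    by (simp add: kernel_def real_add_group_def)
  show ?thesis
    unfolding kernel
  proof (rule subgroupI)
    show "{x \<in> H. \<psi> x = 0} \<subseteq> carrier G" using subgroup.subset[OF assms(1)] by blast
    show "{x \<in> H. \<psi> x = 0} \<noteq> {}"
      using subgroup.one_closed[OF assms(1)] hom_real_add_group_one[OF assms] by blast
  next
    fix a assume "a \<in> {x \<in> H. \<psi> x = 0}"
    then show "inv a \<in> {x \<in> H. \<psi> x = 0}"
      using subgroup.m_inv_closed[OF assms(1)] hom_real_add_group_inv[OF assms] by simp
  next
    fix a b assume "a \<in> {x \<in> H. \<psi> x = 0}" "b \<in> {x \<in> H. \<psi> x = 0}"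
    then show "a \<otimes> b \<in> {x \<in> H. \<psi> x = 0}"
      using subgroup.m_closed[OF assms(1)] hom_real_add_group_mult[OF assms(2)] by simp
  qed
qed

lemma (in group) infinite_subgroup_if_infinite_order:
  assumes "subgroup K G" "x \<in> K" "infinite_order G x"
  shows "infinite K"
proof
  assume "finite K"
  then have "ord x \<noteq> 0" by (rule ord_ne_0_if_finite_subgroup[OF assms(1) _ assms(2)])
  moreover have "x \<in> carrier G" using subgroup.mem_carrier[OF assms(1,2)] .
  ultimately show False using assms(3) ord_eq_0 unfolding infinite_order_def by simp
qed

lemma (in group) infinite_order_nat_pow:
  assumes "x \<in> carrier G" "infinite_order G x" "k > 0"
  shows "infinite_order G (x [^] (k::nat))"
  using assms unfolding infinite_order_def by (simp add: nat_pow_pow)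

lemma (in group) hom_real_add_group_trivial_if_finite:
  assumes "subgroup H G" "finite H" "\<psi> \<in> hom (G\<lparr>carrier := H\<rparr>) real_add_group" "h \<in> H"
  shows "\<psi> h = 0"
proof -
  have "ord h > 0" using ord_ne_0_if_finite_subgroup[OF assms(1,2,4)] by simp
  moreover have "h [^] ord h = \<one>" using pow_ord_eq_1[OF subgroup.mem_carrier[OF assms(1,4)]] .
  then have "\<psi> (h [^] ord h) = 0" using hom_real_add_group_one[OF assms(1,3)] by simp
  ultimately show ?thesis by (rule hom_real_add_group_eq_0_if_pow[OF assms(1,3,4)])
qed

lemma (in group) hom_real_add_group_trivial_if_finite_index:
  assumes "finite_generating_set G S" "almost_simple G" "distortion_element G S u"
    and "H \<lhd> G" "finite (rcosets H)" and hom: "\<psi> \<in> hom (G\<lparr>carrier := H\<rparr>) real_add_group"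
    and "h \<in> H"
  shows "\<psi> h = 0"
proof -
  have H: "subgroup H G" using normal_imp_subgroup[OF assms(4)] .
  have u: "u \<in> carrier G" "infinite_order G u"
    using assms(3) unfolding distortion_element_def by simp_all
  obtain k :: nat where "k > 0" and uk: "u [^] k \<in> H"
    using normal.pow_in_normal_if_finite_index[OF assms(4,5) u(1)] by blast
  have uk_distorted: "distorted G S (u [^] k)"
    using distorted_nat_pow[OF assms(1) u(1) distortion_element_imp_distorted[OF assms(3)] \<open>k > 0\<close>] .
  define K where "K = normal_core G (kernel (G\<lparr>carrier := H\<rparr>) real_add_group \<psi>)"
  have K: "K \<lhd> G"
    unfolding K_def by (intro normal_core_normal subgroup_kernel_hom_real_add_group H hom)
  have "u [^] k \<in> K"
  proof -
    have "\<psi> (g \<otimes> u [^] k \<otimes> inv g) = 0" if "g \<in> carrier G" for g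
      using hom_real_add_group_eq_0_if_distorted[OF assms(1) H assms(5)
          hom_real_add_group_conj[OF assms(4) hom that] uk uk_distorted] .
    moreover have "g \<otimes> u [^] k \<otimes> inv g \<in> H" if "g \<in> carrier G" for g
      using normal.inv_op_closed2[OF assms(4) that uk] .
    ultimately show ?thesis
      using u(1) unfolding K_def normal_core_iff kernel_def real_add_group_def by simp
  qed
  moreover have "infinite_order G (u [^] k)" using infinite_order_nat_pow[OF u \<open>k > 0\<close>] .
  ultimately have "infinite K" by (rule infinite_subgroup_if_infinite_order[OF normal_imp_subgroup[OF K]])
  then have "finite (rcosets K)" using assms(2) K unfolding almost_simple_def by blast
  then obtain n :: nat where "n > 0" "h [^] n \<in> K"
    using normal.pow_in_normal_if_finite_index[OF K _ subgroup.mem_carrier[OF H assms(7)]] by blast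
  then have "h [^] n \<in> kernel (G\<lparr>carrier := H\<rparr>) real_add_group \<psi>"
    using normal_core_subset unfolding K_def by blast
  then have "\<psi> (h [^] n) = 0" by (simp add: kernel_def real_add_group_def)
  with \<open>n > 0\<close> show ?thesis by (rule hom_real_add_group_eq_0_if_pow[OF H hom assms(7)])
qed

theorem lemma7p2:
  fixes G :: "('a, 'b) monoid_scheme" and H :: "'a set" and S :: "'a set"
    and u :: 'a and \<psi> :: "'a \<Rightarrow> real"
  assumes "group G"
    and "finite_generating_set G S"
    and "almost_simple G"
    and "distortion_element G S u"
    and "H \<lhd> G"
    and "\<psi> \<in> hom (G\<lparr>carrier := H\<rparr>) real_add_group"
  shows "\<forall>h\<in>H. \<psi> h = 0"
proof
  interpret group G by fact
  fix h assume h: "h \<in> H"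
  have "finite H \<or> finite (rcosets\<^bsub>G\<^esub> H)"
    using assms(3,5) unfolding almost_simple_def by blast
  then show "\<psi> h = 0"
  proof
    assume "finite H"
    with normal_imp_subgroup[OF assms(5)] show ?thesis
      using assms(6) h by (rule hom_real_add_group_trivial_if_finite)
  next
    assume "finite (rcosets\<^bsub>G\<^esub> H)"
    with assms(2-5) show ?thesis
      using assms(6) h by (rule hom_real_add_group_trivial_if_finite_index)
  qed
qed

end
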